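(* Let $A$ be a modal formula and let $t$ be a translation for $A$ based on a sequence $Q=\{q_i\}_{i=0}^\infty$ of atoms not occurring in $A$. If $\mathbf{GL}\vdash A^t$, then $\mathbf{K4}\vdash A$.
   Context: Modal formulas are built from atoms and $\bot$ using $\wedge,\vee,\to,\neg,\Box$. $\mathbf{K4}$ is the normal modal logic with axioms $\mathbf{K}$ and $\Box A\to\Box\Box A$; $\mathbf{GL}$ is $\mathbf{K4}$ plus Löb's axiom $\Box(\Box A\to A)\to\Box A$. A translation $t$ for $A$ based on $Q$ is an assignment of natural numbers to the occurrences of $\Box$ in $A$ such that the number assigned to any box occurrence is greater than the numbers assigned to all box occurrences within its scope. $A^t$ is defined by: $p^t=p$ for atoms; $(B\circ C)^t=B^t\circ C^t$ for $\circ\in\{\wedge,\vee,\to\}$; $(\neg B)^t=\neg B^t$; $(\Box B)^t=\Box(\bigwedge_{i=0}^n q_i\to B^t)$ where $n$ is the number $t$ assigns to that box occurrence. *)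

theory Defs
  imports Main
begin

datatype 'a fm =
    Atom 'a
  | Bot
  | And "'a fm" "'a fm"
  | Or "'a fm" "'a fm"
  | Imp "'a fm" "'a fm"
  | Neg "'a fm"
  | Box "'a fm"

fun atoms :: "'a fm \<Rightarrow> 'a set" where
  "atoms (Atom p) = {p}"
| "atoms Bot = {}"
| "atoms (And A B) = atoms A \<union> atoms B"
| "atoms (Or A B) = atoms A \<union> atoms B"
| "atoms (Imp A B) = atoms A \<union> atoms B"
| "atoms (Neg A) = atoms A"
| "atoms (Box A) = atoms A"

text \<open>Classical propositional evaluation, treating boxed formulas as propositional
  variables; a tautology (instance) is a formula true under every such valuation.\<close>

fun peval :: "('a fm \<Rightarrow> bool) \<Rightarrow> 'a fm \<Rightarrow> bool" where
  "peval v (Atom p) = v (Atom p)"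
| "peval v Bot = False"
| "peval v (And A B) = (peval v A \<and> peval v B)"
| "peval v (Or A B) = (peval v A \<or> peval v B)"
| "peval v (Imp A B) = (peval v A \<longrightarrow> peval v B)"
| "peval v (Neg A) = (\<not> peval v A)"
| "peval v (Box A) = v (Box A)"

definition taut :: "'a fm \<Rightarrow> bool" where
  "taut A \<longleftrightarrow> (\<forall>v. peval v A)"

inductive K4 :: "'a fm \<Rightarrow> bool" where
  K4_taut: "taut A \<Longrightarrow> K4 A"
| K4_K: "K4 (Imp (Box (Imp A B)) (Imp (Box A) (Box B)))"
| K4_4: "K4 (Imp (Box A) (Box (Box A)))"
| K4_MP: "K4 (Imp A B) \<Longrightarrow> K4 A \<Longrightarrow> K4 B"
| K4_Nec: "K4 A \<Longrightarrow> K4 (Box A)"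

inductive GL :: "'a fm \<Rightarrow> bool" where
  GL_taut: "taut A \<Longrightarrow> GL A"
| GL_K: "GL (Imp (Box (Imp A B)) (Imp (Box A) (Box B)))"
| GL_4: "GL (Imp (Box A) (Box (Box A)))"
| GL_Loeb: "GL (Imp (Box (Imp (Box A) A)) (Box A))"
| GL_MP: "GL (Imp A B) \<Longrightarrow> GL A \<Longrightarrow> GL B"
| GL_Nec: "GL A \<Longrightarrow> GL (Box A)"

text \<open>A translation for A assigns a natural number to each occurrence of Box in A.
  We represent it as a formula whose boxes carry a number and which erases to A.\<close>

datatype 'a nfm =
    NAtom 'a
  | NBot
  | NAnd "'a nfm" "'a nfm"
  | NOr "'a nfm" "'a nfm"
  | NImp "'a nfm" "'a nfm"
  | NNeg "'a nfm"
  | NBox nat "'a nfm"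

fun erase :: "'a nfm \<Rightarrow> 'a fm" where
  "erase (NAtom p) = Atom p"
| "erase NBot = Bot"
| "erase (NAnd A B) = And (erase A) (erase B)"
| "erase (NOr A B) = Or (erase A) (erase B)"
| "erase (NImp A B) = Imp (erase A) (erase B)"
| "erase (NNeg A) = Neg (erase A)"
| "erase (NBox n A) = Box (erase A)"

fun boxnums :: "'a nfm \<Rightarrow> nat set" where
  "boxnums (NAtom p) = {}"
| "boxnums NBot = {}"
| "boxnums (NAnd A B) = boxnums A \<union> boxnums B"
| "boxnums (NOr A B) = boxnums A \<union> boxnums B"
| "boxnums (NImp A B) = boxnums A \<union> boxnums B"
| "boxnums (NNeg A) = boxnums A"
| "boxnums (NBox n A) = insert n (boxnums A)"

fun wf_num :: "'a nfm \<Rightarrow> bool" where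
  "wf_num (NAtom p) = True"
| "wf_num NBot = True"
| "wf_num (NAnd A B) = (wf_num A \<and> wf_num B)"
| "wf_num (NOr A B) = (wf_num A \<and> wf_num B)"
| "wf_num (NImp A B) = (wf_num A \<and> wf_num B)"
| "wf_num (NNeg A) = wf_num A"
| "wf_num (NBox n A) = (wf_num A \<and> (\<forall>m\<in>boxnums A. m < n))"

definition is_translation :: "'a nfm \<Rightarrow> 'a fm \<Rightarrow> bool" where
  "is_translation t A \<longleftrightarrow> erase t = A \<and> wf_num t"

fun qconj :: "(nat \<Rightarrow> 'a) \<Rightarrow> nat \<Rightarrow> 'a fm" where
  "qconj Q 0 = Atom (Q 0)"
| "qconj Q (Suc n) = And (qconj Q n) (Atom (Q (Suc n)))"

fun translate :: "(nat \<Rightarrow> 'a) \<Rightarrow> 'a nfm \<Rightarrow> 'a fm" where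
  "translate Q (NAtom p) = Atom p"
| "translate Q NBot = Bot"
| "translate Q (NAnd A B) = And (translate Q A) (translate Q B)"
| "translate Q (NOr A B) = Or (translate Q A) (translate Q B)"
| "translate Q (NImp A B) = Imp (translate Q A) (translate Q B)"
| "translate Q (NNeg A) = Neg (translate Q A)"
| "translate Q (NBox n A) = Box (Imp (qconj Q n) (translate Q A))"

end

theory Submission
  imports Defs
begin

text \<open>Suppose \<open>K4 \<nvdash> A\<close> and extend \<open>{\<not>A}\<close> to a maximal K4-consistent set \<open>M\<close>. Take the canonical
  K4 model with every world duplicated at all ranks \<open>i \<in> \<nat>\<close>, a world seeing only worlds of strictly
  smaller rank. This frame is transitive and conversely well-founded, so it validates GL. Let \<open>q\<^sub>k\<close>
  mean ``the rank is at least \<open>k\<close>''. A box numbered \<open>n\<close> in \<open>A\<^sup>t\<close> then ranges over the successors of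
  rank \<open>\<ge> n\<close>, which include a copy of every canonical successor at rank exactly \<open>n\<close>; as all boxes
  in its scope carry smaller numbers, induction shows that \<open>B\<^sup>t\<close> holds at \<open>(N, j)\<close> iff \<open>B \<in> N\<close>,
  whenever \<open>j\<close> exceeds the numbers of \<open>B\<close>. Hence \<open>A\<^sup>t\<close> fails at \<open>(M, i)\<close> for large \<open>i\<close>.\<close>

section \<open>Kripke semantics and soundness of GL\<close>

fun holds :: "('w \<Rightarrow> 'w \<Rightarrow> bool) \<Rightarrow> ('a \<Rightarrow> 'w \<Rightarrow> bool) \<Rightarrow> 'w \<Rightarrow> 'a fm \<Rightarrow> bool" where
  "holds R V w (Atom p) = V p w"
| "holds R V w Bot = False"
| "holds R V w (And A B) = (holds R V w A \<and> holds R V w B)"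
| "holds R V w (Or A B) = (holds R V w A \<or> holds R V w B)"
| "holds R V w (Imp A B) = (holds R V w A \<longrightarrow> holds R V w B)"
| "holds R V w (Neg A) = (\<not> holds R V w A)"
| "holds R V w (Box A) = (\<forall>u. R w u \<longrightarrow> holds R V u A)"

lemma peval_holds: "peval (holds R V w) A = holds R V w A"
  by (induction A) auto

lemma holds_Loeb:
  assumes "transp R" "wfp (\<lambda>u w. R w u)"
    and step: "\<forall>u. R w u \<longrightarrow> (\<forall>v. R u v \<longrightarrow> holds R V v A) \<longrightarrow> holds R V u A"
  shows "R w u \<longrightarrow> holds R V u A"
  using assms(2)
proof (induction u rule: wfp_induct_rule)
  case (less u)
  show ?case
  proof
    assume "R w u"
    then have "\<forall>v. R u v \<longrightarrow> holds R V v A"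
      using less.IH transpD[OF \<open>transp R\<close>] by blast
    with \<open>R w u\<close> step show "holds R V u A" by blast
  qed
qed

theorem GL_sound:
  assumes "GL A" "transp R" "wfp (\<lambda>u w. R w u)"
  shows "holds R V w A"
  using assms(1)
proof (induction arbitrary: w)
  case (GL_taut A)
  then show ?case unfolding taut_def by (metis peval_holds)
next
  case (GL_4 A)
  then show ?case using transpD[OF assms(2)] by auto
next
  case (GL_Loeb A)
  then show ?case using holds_Loeb[OF assms(2,3)] by auto
qed auto

fun imps :: "'a fm list \<Rightarrow> 'a fm \<Rightarrow> 'a fm" where
  "imps [] B = B"
| "imps (A # As) B = Imp A (imps As B)"

lemma peval_imps: "peval v (imps As B) = ((\<forall>A\<in>set As. peval v A) \<longrightarrow> peval v B)"
  by (induction As) auto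

lemma K4_imps: "K4 (imps As B) \<Longrightarrow> \<forall>A\<in>set As. K4 A \<Longrightarrow> K4 B"
  by (induction As) (auto intro: K4_MP)

lemma K4_tautological_consequence:
  assumes "\<And>v. \<forall>A\<in>set As. peval v A \<Longrightarrow> peval v B" and "\<forall>A\<in>set As. K4 A"
  shows "K4 B"
proof -
  have "taut (imps As B)"
    using assms(1) unfolding taut_def by (simp add: peval_imps)
  then show ?thesis using K4_imps K4_taut assms(2) by blast
qed

fun conjs :: "'a fm list \<Rightarrow> 'a fm" where
  "conjs [] = Imp Bot Bot"
| "conjs (A # As) = And A (conjs As)"

lemma peval_conjs: "peval v (conjs As) = (\<forall>A\<in>set As. peval v A)"
  by (induction As) auto

lemma K4_RK: "K4 (Imp (conjs As) B) \<Longrightarrow> K4 (Imp (conjs (map Box As)) (Box B))"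
proof (induction As arbitrary: B)
  case Nil
  then have "K4 B" by (intro K4_tautological_consequence[of "[Imp (conjs []) B]"]) auto
  then have "K4 (Box B)" by (rule K4_Nec)
  then show ?case by (intro K4_tautological_consequence[of "[Box B]"]) auto
next
  case (Cons A As)
  then have "K4 (Imp (conjs As) (Imp A B))"
    by (intro K4_tautological_consequence[of "[Imp (conjs (A # As)) B]"]) auto
  then have "K4 (Imp (conjs (map Box As)) (Box (Imp A B)))" by (rule Cons.IH)
  then show ?case
    using K4_K[of A B]
    by (intro K4_tautological_consequence[of "[Imp (conjs (map Box As)) (Box (Imp A B)),
          Imp (Box (Imp A B)) (Imp (Box A) (Box B))]"]) auto
qed

section \<open>Maximal K4-consistent sets\<close>

definition K4_consistent :: "'a fm set \<Rightarrow> bool" where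
  "K4_consistent S \<longleftrightarrow> \<not> (\<exists>As. set As \<subseteq> S \<and> K4 (Neg (conjs As)))"

definition K4_maxcons :: "'a fm set \<Rightarrow> bool" where
  "K4_maxcons M \<longleftrightarrow> K4_consistent M \<and> (\<forall>S. K4_consistent S \<longrightarrow> M \<subseteq> S \<longrightarrow> S = M)"

lemma K4_consistent_Union_chain:
  assumes "C \<noteq> {}" "subset.chain {S. K4_consistent S} C"
  shows "K4_consistent (\<Union>C)"
  unfolding K4_consistent_def
proof
  assume "\<exists>As. set As \<subseteq> \<Union>C \<and> K4 (Neg (conjs As))"
  then obtain As where As: "set As \<subseteq> \<Union>C" "K4 (Neg (conjs As))" by blast
  obtain S where "S \<in> C" "set As \<subseteq> S"
    using finite_subset_Union_chain[OF finite_set As(1) assms] .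
  moreover have "K4_consistent S"
    using \<open>S \<in> C\<close> assms(2) unfolding subset.chain_def by blast
  ultimately show False using As(2) unfolding K4_consistent_def by blast
qed

lemma K4_consistent_Neg:
  assumes "\<not> K4 A"
  shows "K4_consistent {Neg A}"
  unfolding K4_consistent_def
proof
  assume "\<exists>As. set As \<subseteq> {Neg A} \<and> K4 (Neg (conjs As))"
  then obtain As where "set As \<subseteq> {Neg A}" "K4 (Neg (conjs As))" by blast
  then have "K4 A"
    by (intro K4_tautological_consequence[of "[Neg (conjs As)]"]) (auto simp: peval_conjs)
  with assms show False ..
qed

lemma K4_lindenbaum:
  assumes "K4_consistent S0"
  obtains M where "S0 \<subseteq> M" "K4_maxcons M"
proof -
  let ?C = "{S. K4_consistent S \<and> S0 \<subseteq> S}"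
  have "\<exists>M\<in>?C. \<forall>S\<in>?C. M \<subseteq> S \<longrightarrow> S = M"
  proof (rule subset_Zorn_nonempty)
    have "S0 \<in> ?C" using assms by simp
    then show "?C \<noteq> {}" by (intro notI) simp
  next
    fix C assume C: "C \<noteq> {}" "subset.chain ?C C"
    then have "S0 \<subseteq> \<Union>C" "subset.chain {S. K4_consistent S} C"
      unfolding subset.chain_def by blast+
    with K4_consistent_Union_chain[OF C(1)] show "\<Union>C \<in> ?C" by simp
  qed
  then obtain M where "M \<in> ?C" "\<forall>S\<in>?C. M \<subseteq> S \<longrightarrow> S = M" ..
  then show ?thesis using that unfolding K4_maxcons_def by (auto simp del: K4_consistent_def)
qed

lemma K4_maxcons_nonmember_refuted:
  assumes "K4_maxcons M" "B \<notin> M"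
  obtains As where "set As \<subseteq> M" "K4 (Imp (conjs As) (Neg B))"
proof -
  have "\<not> K4_consistent (insert B M)"
    using assms unfolding K4_maxcons_def by blast
  then obtain As where As: "set As \<subseteq> insert B M" "K4 (Neg (conjs As))"
    unfolding K4_consistent_def by blast
  let ?As = "filter (\<lambda>A. A \<noteq> B) As"
  have "K4 (Imp (conjs ?As) (Neg B))"
    using As(2) by (intro K4_tautological_consequence[of "[Neg (conjs As)]"]) (auto simp: peval_conjs)
  moreover have "set ?As \<subseteq> M" using As(1) by auto
  ultimately show ?thesis using that by blast
qed

lemma K4_maxcons_closed:
  assumes "K4_maxcons M" "set As \<subseteq> M" "K4 (Imp (conjs As) B)"
  shows "B \<in> M"
proof (rule ccontr)
  assume "B \<notin> M"
  then obtain Bs where Bs: "set Bs \<subseteq> M" "K4 (Imp (conjs Bs) (Neg B))"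
    using K4_maxcons_nonmember_refuted assms(1) by blast
  have "K4 (Neg (conjs (As @ Bs)))"
    using assms(3) Bs(2)
    by (intro K4_tautological_consequence[of "[Imp (conjs As) B, Imp (conjs Bs) (Neg B)]"])
      (auto simp: peval_conjs)
  moreover have "set (As @ Bs) \<subseteq> M" using assms(2) Bs(1) by auto
  ultimately show False using assms(1) unfolding K4_maxcons_def K4_consistent_def by blast
qed

lemma K4_maxcons_taut_closed:
  assumes "K4_maxcons M" "set As \<subseteq> M" "\<And>v. \<forall>A\<in>set As. peval v A \<Longrightarrow> peval v B"
  shows "B \<in> M"
  using assms
  by (intro K4_maxcons_closed[of M As] K4_tautological_consequence[of "[]"]) (auto simp: peval_conjs)

lemma K4_maxcons_theorem: "K4_maxcons M \<Longrightarrow> K4 B \<Longrightarrow> B \<in> M"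
  by (rule K4_maxcons_closed[of M "[]"]) (auto intro: K4_tautological_consequence[of "[B]"])

lemma K4_maxcons_not_refuted:
  assumes "K4_maxcons M" "set As \<subseteq> M"
  shows "\<not> K4 (Neg (conjs As))"
  using assms unfolding K4_maxcons_def K4_consistent_def by blast

lemma K4_maxcons_Neg: "K4_maxcons M \<Longrightarrow> Neg B \<in> M \<longleftrightarrow> B \<notin> M"
proof
  assume "K4_maxcons M" "Neg B \<in> M"
  have "K4 (Neg (conjs [B, Neg B]))" by (rule K4_tautological_consequence[of "[]"]) auto
  then show "B \<notin> M"
    using K4_maxcons_not_refuted[OF \<open>K4_maxcons M\<close>, of "[B, Neg B]"] \<open>Neg B \<in> M\<close> by auto
next
  assume "K4_maxcons M" "B \<notin> M"
  then show "Neg B \<in> M" by (metis K4_maxcons_nonmember_refuted K4_maxcons_closed)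
qed

lemma K4_maxcons_Bot: "K4_maxcons M \<Longrightarrow> Bot \<notin> M"
  using K4_maxcons_not_refuted[of M "[Bot]"] K4_tautological_consequence[of "[]" "Neg (conjs [Bot])"]
  by auto

lemma K4_maxcons_And: "K4_maxcons M \<Longrightarrow> And A B \<in> M \<longleftrightarrow> A \<in> M \<and> B \<in> M"
  by (auto intro: K4_maxcons_taut_closed[of M "[And A B]"] K4_maxcons_taut_closed[of M "[A, B]"])

lemma K4_maxcons_Or: "K4_maxcons M \<Longrightarrow> Or A B \<in> M \<longleftrightarrow> A \<in> M \<or> B \<in> M"
  using K4_maxcons_Neg[of M A]
  by (auto intro: K4_maxcons_taut_closed[of M "[Or A B, Neg A]"] K4_maxcons_taut_closed[of M "[A]"]
      K4_maxcons_taut_closed[of M "[B]"])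

lemma K4_maxcons_Imp: "K4_maxcons M \<Longrightarrow> Imp A B \<in> M \<longleftrightarrow> (A \<in> M \<longrightarrow> B \<in> M)"
  using K4_maxcons_Neg[of M A]
  by (auto intro: K4_maxcons_taut_closed[of M "[Imp A B, A]"] K4_maxcons_taut_closed[of M "[Neg A]"]
      K4_maxcons_taut_closed[of M "[B]"])

definition canon_rel :: "'a fm set \<Rightarrow> 'a fm set \<Rightarrow> bool" where
  "canon_rel M N \<longleftrightarrow> (\<forall>B. Box B \<in> M \<longrightarrow> B \<in> N)"

lemma canon_rel_trans:
  assumes "K4_maxcons M" "canon_rel M N" "canon_rel N P"
  shows "canon_rel M P"
  unfolding canon_rel_def
proof (intro allI impI)
  fix B assume "Box B \<in> M"
  moreover have "Imp (Box B) (Box (Box B)) \<in> M"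
    using K4_maxcons_theorem[OF assms(1) K4_4] .
  ultimately have "Box (Box B) \<in> M" using K4_maxcons_Imp[OF assms(1)] by blast
  then show "B \<in> P" using assms(2,3) unfolding canon_rel_def by blast
qed

lemma K4_maxcons_Box:
  assumes "K4_maxcons M"
  shows "Box B \<in> M \<longleftrightarrow> (\<forall>N. K4_maxcons N \<and> canon_rel M N \<longrightarrow> B \<in> N)"
proof
  assume "Box B \<in> M"
  then show "\<forall>N. K4_maxcons N \<and> canon_rel M N \<longrightarrow> B \<in> N" unfolding canon_rel_def by blast
next
  assume all_succ: "\<forall>N. K4_maxcons N \<and> canon_rel M N \<longrightarrow> B \<in> N"
  show "Box B \<in> M"
  proof (rule ccontr)
    assume "Box B \<notin> M"
    let ?S = "insert (Neg B) {C. Box C \<in> M}"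
    have "K4_consistent ?S"
      unfolding K4_consistent_def
    proof
      assume "\<exists>As. set As \<subseteq> ?S \<and> K4 (Neg (conjs As))"
      then obtain As where As: "set As \<subseteq> ?S" "K4 (Neg (conjs As))" by blast
      let ?As = "filter (\<lambda>A. A \<noteq> Neg B) As"
      have "K4 (Imp (conjs ?As) B)"
        using As(2)
        by (intro K4_tautological_consequence[of "[Neg (conjs As)]"]) (auto simp: peval_conjs)
      then have "K4 (Imp (conjs (map Box ?As)) (Box B))" by (rule K4_RK)
      moreover have "set (map Box ?As) \<subseteq> M" using As(1) by auto
      ultimately show False using K4_maxcons_closed[OF assms] \<open>Box B \<notin> M\<close> by blast
    qed
    then obtain N where "?S \<subseteq> N" "K4_maxcons N" by (rule K4_lindenbaum)
    then show False using all_succ K4_maxcons_Neg unfolding canon_rel_def by blast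
  qed
qed

section \<open>A ranked canonical model for translations\<close>

definition ranked_rel :: "'a fm set \<times> nat \<Rightarrow> 'a fm set \<times> nat \<Rightarrow> bool" where
  "ranked_rel x y \<longleftrightarrow>
     K4_maxcons (fst x) \<and> K4_maxcons (fst y) \<and> canon_rel (fst x) (fst y) \<and> snd y < snd x"

definition rank_val :: "(nat \<Rightarrow> 'a) \<Rightarrow> 'a \<Rightarrow> 'a fm set \<times> nat \<Rightarrow> bool" where
  "rank_val Q p x = (if p \<in> range Q then inv Q p \<le> snd x else Atom p \<in> fst x)"

lemma transp_ranked_rel: "transp ranked_rel"
  by (rule transpI) (auto simp: ranked_rel_def intro: canon_rel_trans)

lemma wfp_converse_ranked_rel: "wfp (\<lambda>y x. ranked_rel x y)"
  by (rule wfp_if_convertible_to_nat[of _ snd]) (simp add: ranked_rel_def)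

lemma holds_qconj:
  assumes "inj Q"
  shows "holds ranked_rel (rank_val Q) (N, j) (qconj Q n) \<longleftrightarrow> n \<le> j"
  using assms by (induction n) (auto simp: rank_val_def)

lemma holds_translate_iff_mem:
  assumes "inj Q" "K4_maxcons M" "wf_num B" "\<forall>m\<in>boxnums B. m < i"
    and "atoms (erase B) \<inter> range Q = {}"
  shows "holds ranked_rel (rank_val Q) (M, i) (translate Q B) \<longleftrightarrow> erase B \<in> M"
  using assms(2-)
proof (induction B arbitrary: M i)
  case (NAtom p)
  then show ?case by (auto simp: rank_val_def)
next
  case NBot
  then show ?case using K4_maxcons_Bot by simp
next
  case (NAnd B1 B2)
  then show ?case by (simp add: K4_maxcons_And Int_Un_distrib2)
next
  case (NOr B1 B2)
  then show ?case by (simp add: K4_maxcons_Or Int_Un_distrib2)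
next
  case (NImp B1 B2)
  then show ?case by (simp add: K4_maxcons_Imp Int_Un_distrib2)
next
  case (NNeg B)
  then show ?case by (simp add: K4_maxcons_Neg)
next
  case (NBox n B)
  have "n < i" using NBox.prems by simp
  have IH: "holds ranked_rel (rank_val Q) (N, j) (translate Q B) \<longleftrightarrow> erase B \<in> N"
    if "K4_maxcons N" "n \<le> j" for N j
  proof (rule NBox.IH[OF that(1)])
    show "wf_num B" "atoms (erase B) \<inter> range Q = {}" using NBox.prems(2,4) by auto
    show "\<forall>m\<in>boxnums B. m < j" using NBox.prems(2) that(2) by fastforce
  qed
  have "holds ranked_rel (rank_val Q) (M, i) (translate Q (NBox n B)) \<longleftrightarrow>
      (\<forall>N j. K4_maxcons N \<and> canon_rel M N \<and> j < i \<and> n \<le> j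
         \<longrightarrow> holds ranked_rel (rank_val Q) (N, j) (translate Q B))"
    using NBox.prems(1) holds_qconj[OF assms(1)] by (auto simp: ranked_rel_def)
  also have "\<dots> \<longleftrightarrow> (\<forall>N. K4_maxcons N \<and> canon_rel M N \<longrightarrow> erase B \<in> N)"
    using IH \<open>n < i\<close> by (metis order.refl)
  also have "\<dots> \<longleftrightarrow> erase (NBox n B) \<in> M"
    using K4_maxcons_Box[OF NBox.prems(1)] by simp
  finally show ?case .
qed

lemma finite_boxnums: "finite (boxnums B)"
  by (induction B) auto

theorem theorem4p3:
  fixes A :: "'a fm" and t :: "'a nfm" and Q :: "nat \<Rightarrow> 'a"
  assumes "inj Q"
    and "range Q \<inter> atoms A = {}"
    and "is_translation t A"
    and "GL (translate Q t)"
  shows "K4 A"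
proof (rule ccontr)
  assume "\<not> K4 A"
  then have "K4_consistent {Neg A}" by (rule K4_consistent_Neg)
  then obtain M where "Neg A \<in> M" "K4_maxcons M" by (rule K4_lindenbaum) blast
  obtain i where "\<forall>m\<in>boxnums t. m < i"
    using finite_boxnums finite_nat_set_iff_bounded by blast
  then have "holds ranked_rel (rank_val Q) (M, i) (translate Q t) \<longleftrightarrow> A \<in> M"
    using holds_translate_iff_mem[OF assms(1) \<open>K4_maxcons M\<close>] assms(2,3)
    unfolding is_translation_def by blast
  moreover have "holds ranked_rel (rank_val Q) (M, i) (translate Q t)"
    using GL_sound[OF assms(4) transp_ranked_rel wfp_converse_ranked_rel] .
  ultimately show False using \<open>Neg A \<in> M\<close> K4_maxcons_Neg[OF \<open>K4_maxcons M\<close>] by blast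
qed

end
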